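(* Let $P$ be a planar point set of $n$ points in general position, let $W\in\mathbb{Z}^{n\times3}$ be arbitrary, and let $\mathcal{Q}$ be an arbitrary quadrangle tree for $P$. Then there exists an injective map \[ \Phi: V(P,W)\hookrightarrow \mathrm{OD}(P,\mathcal{Q})\times\mathrm{CA}(W)\times\mathrm{HL}(P). \]
   Context: General position: no duplicates, no three collinear. $\mathrm{CH}(P)$ is the convex hull, $\mathrm{ch}(P)$ the points of $P$ on its boundary, $k=|\mathrm{ch}(P)|$. $\mathbb{I}_P$ is the set of arrays $I_P$ of length $n$ (indices $1,\dots,n$) storing the points of $P$. A hull list of $I_P$ is a sequence $(h_1,\dots,h_k)$ such that $I_P[h_1],\dots,I_P[h_k]$ are the points of $\mathrm{ch}(P)$ in cyclic order with $I_P[h_1]$ the leftmost. $\mathrm{HL}(P)$ is the set of all integer lists of length $k$ that are a hull list of some $I_P\in\mathbb{I}_P$. A witness list of $I_P$ is $W=(a_i,b_i,c_i)_{i=1}^n$ with $a_i=b_i=c_i=-1$ if $I_P[i]\in\mathrm{ch}(P)$ and otherwise $I_P[i]$ in the interior of triangle $(I_P[a_i],I_P[b_i],I_P[c_i])$. $V(P,W)=\{I_P\in\mathbb{I}_P: W\text{ is a witness list of }I_P\}$. A corner assignment of $W$ is a map $C$ on $[n]$ with $C(i)\in\{a_i,b_i,c_i\}$ for all $i$; $\mathrm{CA}(W)$ is their set. A rooted convex polygon $(C,p,q)$ is a convex polygon with a chosen edge $pq$; for distinct vertices $r,s$ of $C$, $C^{rs}$ is the piece of $C$ cut by line $rs$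 not containing $pq$. A quadrangle tree of $(C,p,q)$ is a binary tree whose nodes store quadrangles spanned by (up to) four vertices of $C$: the root stores $p,q,s,r$ where $rs$ is an edge of $C$ (allowing $p=r$ and/or $q=s$); if $p\ne r$ the root has a child whose subtree is a quadrangle tree of $(C^{pr},p,r)$; if $q\ne s$ the root has a child whose subtree is a quadrangle tree of $(C^{qs},q,s)$. Each node's rooted edge is the chosen edge of its rooted polygon. A quadrangle tree for $P$ is a quadrangle tree of $(\mathrm{CH}(P),p,q)$ for an edge $pq$ of $\mathrm{CH}(P)$. The population of a node is the set of points of $P$ on or inside its quadrangle except those on the line of its rooted edge; $r(x)$ denotes the node whose population contains $x$. Partial order: $x\prec_{\mathcal{Q}}y$ if $r(x)$ is a strict ancestor of $r(y)$, or $r(x)=r(y)$ and $y$ lies deeper than $x$ inside the halfplane bounded by the rooted-edge line of $r(x)$ containing its quadrangle. A downdraft is a map $\varphi:P-\mathrm{ch}(P)\to P$ with $x\prec_{\mathcal{Q}}\varphi(x)$ for all $x$; an ordered downdraft is a downdraft plus a total order on each fiber $\varphi^{-1}(\{y\})$; $\mathrm{OD}(P,\mathcal{Q})$ is the set of ordered downdrafts. *)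

theory Defs
  imports "HOL-Analysis.Analysis" "HOL-Library.FuncSet"
begin

type_synonym pt = "real \<times> real"

definition gen_pos :: "pt set \<Rightarrow> bool" where
  "gen_pos P \<longleftrightarrow> (\<forall>a\<in>P. \<forall>b\<in>P. \<forall>c\<in>P. a \<noteq> b \<and> a \<noteq> c \<and> b \<noteq> c \<longrightarrow> \<not> collinear {a, b, c})"

definition chP :: "pt set \<Rightarrow> pt set" where
  "chP P = {x \<in> P. x \<in> frontier (convex hull P)}"

text \<open>Orientation determinant: positive iff c lies strictly to the left of the directed line a->b.\<close>
definition orient :: "pt \<Rightarrow> pt \<Rightarrow> pt \<Rightarrow> real" where
  "orient a b c = (fst b - fst a) * (snd c - snd a) - (snd b - snd a) * (fst c - fst a)"

definition ccw_cyclic :: "pt list \<Rightarrow> bool" where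
  "ccw_cyclic L \<longleftrightarrow> distinct L \<and>
     (\<forall>i < length L. \<forall>z \<in> set L. z \<noteq> L ! i \<and> z \<noteq> L ! ((i + 1) mod length L) \<longrightarrow>
        orient (L ! i) (L ! ((i + 1) mod length L)) z > 0)"

definition leftmost_in :: "pt \<Rightarrow> pt set \<Rightarrow> bool" where
  "leftmost_in a S \<longleftrightarrow> a \<in> S \<and> (\<forall>z\<in>S. fst a < fst z \<or> (fst a = fst z \<and> snd a \<le> snd z))"

text \<open>Arrays I_P storing the points of P: lists of length n = |P| with distinct entries
  forming P.  Array indices are 1-based: I[h] = I ! (h - 1).\<close>
definition arrays :: "pt set \<Rightarrow> pt list set" where
  "arrays P = {I. distinct I \<and> set I = P}"

definition aget :: "pt list \<Rightarrow> int \<Rightarrow> pt" where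
  "aget I h = I ! (nat h - 1)"

definition valid_idx :: "pt list \<Rightarrow> int \<Rightarrow> bool" where
  "valid_idx I h \<longleftrightarrow> 1 \<le> h \<and> h \<le> int (length I)"

definition is_hull_list :: "pt set \<Rightarrow> pt list \<Rightarrow> int list \<Rightarrow> bool" where
  "is_hull_list P I hs \<longleftrightarrow>
     (\<forall>h\<in>set hs. valid_idx I h) \<and>
     set (map (aget I) hs) = chP P \<and> ccw_cyclic (map (aget I) hs) \<and>
     hs \<noteq> [] \<and> leftmost_in (aget I (hd hs)) (chP P)"

definition HL :: "pt set \<Rightarrow> int list set" where
  "HL P = {hs. \<exists>I\<in>arrays P. is_hull_list P I hs}"

text \<open>Witness lists: W is an n x 3 integer matrix, given as a list of n triples; entry i-1
  of the list is row i.\<close>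
definition is_witness :: "pt set \<Rightarrow> pt list \<Rightarrow> (int \<times> int \<times> int) list \<Rightarrow> bool" where
  "is_witness P I W \<longleftrightarrow> length W = length I \<and>
     (\<forall>i < length I. case W ! i of (a, b, c) \<Rightarrow>
        (if I ! i \<in> chP P then a = -1 \<and> b = -1 \<and> c = -1
         else valid_idx I a \<and> valid_idx I b \<and> valid_idx I c \<and>
              I ! i \<in> interior (convex hull {aget I a, aget I b, aget I c})))"

definition V :: "pt set \<Rightarrow> (int \<times> int \<times> int) list \<Rightarrow> pt list set" where
  "V P W = {I \<in> arrays P. is_witness P I W}"

text \<open>Corner assignments: maps on [n], given as lists of length n.\<close>
definition CA :: "(int \<times> int \<times> int) list \<Rightarrow> int list set" where
  "CA W = {C. length C = length W \<and>
     (\<forall>i < length W. case W ! i of (a, b, c) \<Rightarrow> C ! i \<in> {a, b, c})}"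

text \<open>Quadrangle trees.  A node stores p q s r and its two (possibly absent) children:
  the child for (C^{pr},p,r) and the child for (C^{qs},q,s).\<close>
datatype qtree = QLeaf | QNode pt pt pt pt qtree qtree

text \<open>A rooted convex polygon (C,p,q) is represented by the list L of its vertices in cyclic
  order starting at p and ending at q (so pq is an edge).  An edge rs of C with r on the p-side
  and s on the q-side is a pair of consecutive entries of L.\<close>
inductive qtree_of :: "pt list \<Rightarrow> qtree \<Rightarrow> bool" where
  "\<lbrakk> Suc j < length L;
     (j = 0 \<and> tL = QLeaf) \<or> (j \<noteq> 0 \<and> qtree_of (take (Suc j) L) tL);
     (Suc j = length L - 1 \<and> tR = QLeaf) \<or> (Suc j \<noteq> length L - 1 \<and> qtree_of (rev (drop (Suc j) L)) tR) \<rbrakk>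
   \<Longrightarrow> qtree_of L (QNode (hd L) (last L) (L ! Suc j) (L ! j) tL tR)"

definition qtree_for :: "pt set \<Rightarrow> qtree \<Rightarrow> bool" where
  "qtree_for P Q \<longleftrightarrow> (\<exists>L. set L = chP P \<and> 2 \<le> length L \<and>
      (ccw_cyclic L \<or> ccw_cyclic (rev L)) \<and> qtree_of L Q)"

fun qnodes :: "qtree \<Rightarrow> (bool list \<times> pt \<times> pt \<times> pt \<times> pt) set" where
  "qnodes QLeaf = {}"
| "qnodes (QNode p q s r tL tR) = {([], p, q, s, r)}
     \<union> (\<lambda>(\<pi>, nd). (False # \<pi>, nd)) ` qnodes tL \<union> (\<lambda>(\<pi>, nd). (True # \<pi>, nd)) ` qnodes tR"

definition pop :: "pt set \<Rightarrow> pt \<times> pt \<times> pt \<times> pt \<Rightarrow> pt set" where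
  "pop P nd = (case nd of (p, q, s, r) \<Rightarrow>
     {x \<in> P. x \<in> convex hull {p, q, s, r} \<and> x \<notin> affine hull {p, q}})"

definition qprec :: "pt set \<Rightarrow> qtree \<Rightarrow> pt \<Rightarrow> pt \<Rightarrow> bool" where
  "qprec P Q x y \<longleftrightarrow> (\<exists>\<pi>1 nd1 \<pi>2 nd2. (\<pi>1, nd1) \<in> qnodes Q \<and> (\<pi>2, nd2) \<in> qnodes Q \<and>
      x \<in> pop P nd1 \<and> y \<in> pop P nd2 \<and>
      ((\<exists>z. z \<noteq> [] \<and> \<pi>2 = \<pi>1 @ z) \<or>
       (\<pi>1 = \<pi>2 \<and> (case nd1 of (p, q, s, r) \<Rightarrow>
           infdist x (affine hull {p, q}) < infdist y (affine hull {p, q})))))"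

definition OD :: "pt set \<Rightarrow> qtree \<Rightarrow> ((pt \<Rightarrow> pt) \<times> pt rel) set" where
  "OD P Q = {(\<phi>, R). \<phi> \<in> (P - chP P) \<rightarrow>\<^sub>E P \<and> (\<forall>x \<in> P - chP P. qprec P Q x (\<phi> x)) \<and>
     R \<subseteq> {(a, b). a \<in> P - chP P \<and> b \<in> P - chP P \<and> \<phi> a = \<phi> b} \<and>
     (\<forall>y\<in>P. linear_order_on {x \<in> P - chP P. \<phi> x = y}
                (R \<inter> ({x \<in> P - chP P. \<phi> x = y} \<times> {x \<in> P - chP P. \<phi> x = y})))}"

end

theory Submission
  imports Defs
begin

(* Points are ranked by a height read off the quadrangle tree: the depth of the deepest node
   whose population contains the point, then the distance from that node's rooted edge.  If x
   is interior with witness triangle abc, consider the vertex of abc farthest beyond the rooted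
   edge pq of x's node: it lies either in the same quadrangle, farther from pq, or beyond a
   diagonal pr or qs and hence in a deeper node.  So it is above x both in the order of the
   tree and in height.  Choosing this corner for every interior point gives a downdraft and a
   corner assignment; ordering each fiber by array position and recording the positions of the
   hull points in counterclockwise order from the leftmost one, the array can be reconstructed
   from the highest points downwards. *)

lemma finite_strict_order_induct:
  assumes "finite A" "x \<in> A"
    and trans: "\<And>x y z. r x y \<Longrightarrow> r y z \<Longrightarrow> r x z" and irrefl: "\<And>x. \<not> r x x"
    and step: "\<And>x. x \<in> A \<Longrightarrow> (\<And>y. y \<in> A \<Longrightarrow> r x y \<Longrightarrow> P y) \<Longrightarrow> P x"
  shows "P x"
proof -
  let ?R = "{(y, x). x \<in> A \<and> y \<in> A \<and> r x y}"
  have "?R \<subseteq> A \<times> A" by blast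
  then have "finite ?R" using assms(1) finite_subset by blast
  moreover have "trans ?R" unfolding trans_def using trans by blast
  then have "acyclic ?R" unfolding acyclic_def using irrefl by simp
  ultimately have "wf ?R" by (rule finite_acyclic_wf)
  then have "x \<in> A \<longrightarrow> P x"
  proof (induction x rule: wf_induct_rule)
    case (less x)
    show ?case
    proof
      assume "x \<in> A"
      show "P x" by (rule step[OF \<open>x \<in> A\<close>]) (use less \<open>x \<in> A\<close> in blast)
    qed
  qed
  then show ?thesis using assms(2) by blast
qed

text \<open>An element of a finite linearly ordered set is determined by the number of elements
  below it.\<close>
lemma eq_if_same_order_same_image:
  fixes f g :: "'a \<Rightarrow> 'b::linorder"
  assumes "finite F" "inj_on f F" "inj_on g F" "f ` F = g ` F"
    and same_order: "\<And>u w. u \<in> F \<Longrightarrow> w \<in> F \<Longrightarrow> f u \<le> f w \<longleftrightarrow> g u \<le> g w"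
    and "x \<in> F"
  shows "f x = g x"
proof -
  define rank where "rank t = card {s \<in> f ` F. s < t}" for t
  have rank_image: "rank (h x) = card {w \<in> F. h w < h x}" if "inj_on h F" "h ` F = f ` F"
    for h :: "'a \<Rightarrow> 'b"
  proof -
    have "{s \<in> f ` F. s < h x} = h ` {w \<in> F. h w < h x}" unfolding that(2)[symmetric] by blast
    moreover have "inj_on h {w \<in> F. h w < h x}" using that(1) by (rule inj_on_subset) blast
    ultimately show ?thesis unfolding rank_def by (simp add: card_image)
  qed
  have "f w < f x \<longleftrightarrow> g w < g x" if "w \<in> F" for w
    unfolding not_le[symmetric] using same_order[OF \<open>x \<in> F\<close> that] by blast
  then have "{w \<in> F. f w < f x} = {w \<in> F. g w < g x}" by blast
  then have same_rank: "rank (f x) = rank (g x)"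
    using rank_image[OF assms(2) refl] rank_image[OF assms(3) assms(4)[symmetric]] by (simp only:)
  have rank_mono: "rank s < rank t" if "s < t" "s \<in> f ` F" for s t
  proof -
    have "{u \<in> f ` F. u < s} \<subset> {u \<in> f ` F. u < t}"
      using that by (auto dest: less_trans)
    then show ?thesis unfolding rank_def using assms(1) by (intro psubset_card_mono) simp_all
  qed
  have "f x \<in> f ` F" "g x \<in> f ` F" using \<open>x \<in> F\<close> assms(4) by auto
  show ?thesis
  proof (rule linorder_cases[of "f x" "g x"])
    assume "f x < g x"
    then show ?thesis using rank_mono[OF _ \<open>f x \<in> f ` F\<close>] same_rank by fastforce
  next
    assume "g x < f x"
    then show ?thesis using rank_mono[OF _ \<open>g x \<in> f ` F\<close>] same_rank by fastforce
  qed
qed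

lemma linear_order_on_inj:
  fixes f :: "'a \<Rightarrow> 'b::linorder"
  assumes "inj_on f A"
  shows "linear_order_on A {(u, w). u \<in> A \<and> w \<in> A \<and> f u \<le> f w}"
  using assms unfolding linear_order_on_def partial_order_on_def preorder_on_def refl_on_def
    trans_def antisym_def total_on_def inj_on_def
  by auto

definition index_of :: "'a list \<Rightarrow> 'a \<Rightarrow> nat" where
  "index_of I x = (THE i. i < length I \<and> I ! i = x)"

lemma index_of:
  assumes "distinct I" "x \<in> set I"
  shows "index_of I x < length I" "I ! index_of I x = x"
  using theI'[OF distinct_Ex1[OF assms]] unfolding index_of_def by simp_all

lemma index_of_nth: "distinct I \<Longrightarrow> i < length I \<Longrightarrow> index_of I (I ! i) = i"
  using index_of[of I "I ! i"] nth_eq_iff_index_eq[of I "index_of I (I ! i)" i] by auto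

lemma inj_on_index_of: "distinct I \<Longrightarrow> inj_on (index_of I) (set I)"
  by (metis index_of(2) inj_onI)

lemma aget_Suc: "aget I (int i + 1) = I ! i"
  unfolding aget_def by (simp add: nat_add_distrib)

lemma aget_mem: "valid_idx I k \<Longrightarrow> aget I k \<in> set I"
  unfolding valid_idx_def aget_def by (intro nth_mem) linarith

lemma aget_eq_iff:
  assumes "distinct I" "valid_idx I k" "y \<in> set I"
  shows "aget I k = y \<longleftrightarrow> k = int (index_of I y) + 1"
proof
  assume "aget I k = y"
  then have "index_of I y = nat k - 1"
    using assms index_of_nth[of I "nat k - 1"] unfolding aget_def valid_idx_def by auto
  then show "k = int (index_of I y) + 1" using assms(2) unfolding valid_idx_def by linarith
qed (simp add: aget_Suc index_of assms)

section \<open>Orientation\<close>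

lemma orient_rotate: "orient a b c = orient b c a"
  unfolding orient_def by (simp add: algebra_simps)

lemma orient_swap12: "orient b a c = - orient a b c"
  unfolding orient_def by (simp add: algebra_simps)

lemma orient_swap23: "orient a c b = - orient a b c"
  unfolding orient_def by (simp add: algebra_simps)

lemma orient_reverse: "orient c b a = - orient a b c"
  unfolding orient_def by (simp add: algebra_simps)

lemma orient_degenerate [simp]: "orient a a c = 0" "orient a b b = 0" "orient a b a = 0"
  unfolding orient_def by (simp_all add: algebra_simps)

lemma orient_pluecker:
  "orient a d w * orient a u z = orient a d u * orient a w z + orient a d z * orient a u w"
  unfolding orient_def by (simp add: algebra_simps)

lemma orient_affine_comb:
  assumes "u + v = 1"
  shows "orient a b (u *\<^sub>R x + v *\<^sub>R y) = u * orient a b x + v * orient a b y"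
proof -
  have v: "v = 1 - u" using assms by simp
  show ?thesis unfolding orient_def v by (simp add: algebra_simps)
qed

lemma orient_in_affine_hull:
  assumes "z \<in> affine hull {p, q}"
  shows "orient p q z = 0"
proof -
  obtain u v where "z = u *\<^sub>R p + v *\<^sub>R q" "u + v = 1"
    using assms unfolding affine_hull_2 by auto
  then show ?thesis using orient_affine_comb[of u v p q p q] by simp
qed

lemma convex_orient_halfplane: "convex {z. c \<le> s * orient a b z}"
  unfolding convex_def
proof (intro ballI allI impI, simp)
  fix x y :: pt and u v :: real
  assume h: "c \<le> s * orient a b x" "c \<le> s * orient a b y" "0 \<le> u" "0 \<le> v" "u + v = 1"
  have "c = u * c + v * c" using h(5) by (simp flip: distrib_right)
  also have "\<dots> \<le> u * (s * orient a b x) + v * (s * orient a b y)"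
    using h by (intro add_mono mult_left_mono) auto
  also have "\<dots> = s * orient a b (u *\<^sub>R x + v *\<^sub>R y)"
    using orient_affine_comb[OF h(5)] by (simp add: algebra_simps)
  finally show "c \<le> s * orient a b (u *\<^sub>R x + v *\<^sub>R y)" .
qed

lemma convex_hull_orient_ge:
  assumes "\<And>v. v \<in> S \<Longrightarrow> c \<le> s * orient a b v" "z \<in> convex hull S"
  shows "c \<le> s * orient a b z"
proof -
  have "convex hull S \<subseteq> {z. c \<le> s * orient a b z}"
    by (rule hull_minimal) (use assms convex_orient_halfplane in auto)
  then show ?thesis using assms by auto
qed

lemma convex_hull_orient_le:
  assumes "\<And>v. v \<in> S \<Longrightarrow> s * orient a b v \<le> c" "z \<in> convex hull S"
  shows "s * orient a b z \<le> c"
  using convex_hull_orient_ge[of S "- c" "- s" a b z] assms by fastforce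

text \<open>Barycentric coordinates: the three signed areas of z against the sides, divided by that
  of the triangle.\<close>
lemma in_triangle_if_orient_nonneg:
  assumes D: "0 < s * orient a b c"
    and "0 \<le> s * orient a b z" "0 \<le> s * orient b c z" "0 \<le> s * orient c a z"
  shows "z \<in> convex hull {a, b, c}"
proof -
  define d where "d = orient a b c"
  have "d \<noteq> 0" using D d_def by auto
  have nonneg: "0 \<le> x / d" if "0 \<le> s * x" for x
  proof -
    have "x / d = (s * x) / (s * d)" using D d_def by auto
    also have "\<dots> \<ge> 0" using that D d_def by (intro divide_nonneg_pos) auto
    finally show ?thesis .
  qed
  define u v w where "u = orient b c z / d" and "v = orient c a z / d" and "w = orient a b z / d"
  have "0 \<le> u" "0 \<le> v" "0 \<le> w" unfolding u_def v_def w_def using nonneg assms by auto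
  moreover have "u + v + w = 1"
    using \<open>d \<noteq> 0\<close> unfolding u_def v_def w_def d_def
    by (simp add: field_simps) (simp add: orient_def algebra_simps)
  moreover have "u *\<^sub>R a + v *\<^sub>R b + w *\<^sub>R c = z"
    using \<open>d \<noteq> 0\<close> unfolding u_def v_def w_def d_def
    by (simp add: prod_eq_iff field_simps) (simp add: orient_def algebra_simps)
  ultimately show ?thesis unfolding convex_hull_3 by blast
qed

lemma dist_pt: "dist (p::pt) q = sqrt ((fst p - fst q)^2 + (snd p - snd q)^2)"
  by (simp add: dist_prod_def dist_real_def)

lemma orient_sq_le: "(orient p q z)\<^sup>2 \<le> (dist p q)\<^sup>2 * (dist z w)\<^sup>2" if "orient p q w = 0"
proof -
  define a1 a2 c1 c2 where "a1 = fst q - fst p" and "a2 = snd q - snd p"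
    and "c1 = fst z - fst w" and "c2 = snd z - snd w"
  have "orient p q z = a1 * c2 - a2 * c1"
    using that unfolding orient_def a1_def a2_def c1_def c2_def by (simp add: algebra_simps)
  moreover have "(a1^2 + a2^2) * (c1^2 + c2^2) - (a1 * c2 - a2 * c1)^2 = (a1 * c1 + a2 * c2)^2"
    by (simp add: power2_eq_square algebra_simps)
  moreover have "(dist p q)\<^sup>2 = a1^2 + a2^2" "(dist z w)\<^sup>2 = c1^2 + c2^2"
    unfolding dist_pt a1_def a2_def c1_def c2_def by (simp_all add: power2_commute)
  ultimately show ?thesis by (metis diff_ge_0_iff_ge zero_le_power2)
qed

text \<open>The witness is the orthogonal projection of z onto the line pq.\<close>
lemma line_foot:
  assumes "p \<noteq> q"
  obtains w where "w \<in> affine hull {p, q}" "dist z w = \<bar>orient p q z\<bar> / dist p q"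
proof -
  define a1 a2 b1 b2 where "a1 = fst q - fst p" and "a2 = snd q - snd p"
    and "b1 = fst z - fst p" and "b2 = snd z - snd p"
  define D where "D = a1^2 + a2^2"
  have "a1 \<noteq> 0 \<or> a2 \<noteq> 0" using assms unfolding a1_def a2_def by (auto simp: prod_eq_iff)
  then have "D > 0" unfolding D_def by (simp add: sum_power2_gt_zero_iff)
  define t where "t = (a1 * b1 + a2 * b2) / D"
  define w where "w = (1 - t) *\<^sub>R p + t *\<^sub>R q"
  have "w \<in> affine hull {p, q}" unfolding w_def affine_hull_2 by force
  have "(dist z w)^2 = (b1 - t * a1)^2 + (b2 - t * a2)^2"
    unfolding dist_pt w_def a1_def a2_def b1_def b2_def by (simp add: algebra_simps)
  also have "\<dots> = (b1^2 + b2^2) - 2 * t * (a1 * b1 + a2 * b2) + t^2 * D"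
    unfolding D_def by (simp add: power2_eq_square algebra_simps)
  also have "\<dots> = ((b1^2 + b2^2) * D - (a1 * b1 + a2 * b2)^2) / D"
    unfolding t_def using \<open>D > 0\<close> by (simp add: power2_eq_square field_simps)
  also have "(b1^2 + b2^2) * D - (a1 * b1 + a2 * b2)^2 = (orient p q z)^2"
    unfolding D_def orient_def a1_def a2_def b1_def b2_def by (simp add: power2_eq_square algebra_simps)
  also have "D = (dist p q)^2"
    unfolding D_def dist_pt a1_def a2_def by (simp add: power2_commute)
  finally have "(dist z w)^2 = (\<bar>orient p q z\<bar> / dist p q)^2" by (simp add: power_divide)
  then have "dist z w = \<bar>orient p q z\<bar> / dist p q"
    by (rule power2_eq_imp_eq) auto
  with \<open>w \<in> affine hull {p, q}\<close> show ?thesis by (rule that)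
qed

lemma orient_eq_0_iff_in_line:
  assumes "p \<noteq> q"
  shows "orient p q z = 0 \<longleftrightarrow> z \<in> affine hull {p, q}"
proof
  assume "orient p q z = 0"
  obtain w where "w \<in> affine hull {p, q}" "dist z w = \<bar>orient p q z\<bar> / dist p q"
    using line_foot[OF assms] .
  with \<open>orient p q z = 0\<close> show "z \<in> affine hull {p, q}" by simp
qed (rule orient_in_affine_hull)

lemma infdist_line:
  assumes "p \<noteq> q"
  shows "infdist z (affine hull {p, q}) = \<bar>orient p q z\<bar> / dist p q"
proof (rule antisym)
  obtain w where w: "w \<in> affine hull {p, q}" "dist z w = \<bar>orient p q z\<bar> / dist p q"
    using line_foot[OF assms] .
  show "infdist z (affine hull {p, q}) \<le> \<bar>orient p q z\<bar> / dist p q"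
    using infdist_le[OF w(1), of z] w(2) by simp
  have "\<bar>orient p q z\<bar> / dist p q \<le> dist z w'" if "w' \<in> affine hull {p, q}" for w'
  proof -
    have "\<bar>orient p q z\<bar> \<le> dist p q * dist z w'"
      using orient_sq_le[OF orient_in_affine_hull[OF that]]
      by (metis abs_le_square_iff abs_of_nonneg power_mult_distrib zero_le_dist zero_le_mult_iff)
    then show ?thesis using assms by (simp add: divide_le_eq mult.commute)
  qed
  then show "\<bar>orient p q z\<bar> / dist p q \<le> infdist z (affine hull {p, q})"
    unfolding infdist_def using w(1) by (auto intro!: cINF_greatest)
qed

text \<open>Moving from x a little in the direction of the normal of pq increases s * orient q p,
  and such points stay in the triangle.\<close>
lemma interior_triangle_vertex_beyond:
  assumes x: "x \<in> interior (convex hull {a, b, c})" and "p \<noteq> q" and "s \<noteq> 0"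
  shows "\<exists>v\<in>{a, b, c}. s * orient q p x < s * orient q p v"
proof (rule ccontr)
  assume "\<not> ?thesis"
  then have le: "\<And>v. v \<in> {a, b, c} \<Longrightarrow> s * orient q p v \<le> s * orient q p x" by force
  obtain e where "e > 0" and e: "ball x e \<subseteq> convex hull {a, b, c}"
    using x by (meson mem_interior)
  define u :: pt where "u = (s * (snd q - snd p), s * (fst p - fst q))"
  define K where "K = (fst p - fst q)^2 + (snd p - snd q)^2"
  have "K > 0" using \<open>p \<noteq> q\<close> unfolding K_def by (auto simp: prod_eq_iff sum_power2_gt_zero_iff)
  have "u \<noteq> 0" using \<open>s \<noteq> 0\<close> \<open>p \<noteq> q\<close> unfolding u_def by (auto simp: prod_eq_iff zero_prod_def)
  define d where "d = e / (2 * norm u)"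
  have "d > 0" unfolding d_def using \<open>e > 0\<close> \<open>u \<noteq> 0\<close> by simp
  define y where "y = x + d *\<^sub>R u"
  have "dist x y = e / 2"
    unfolding y_def d_def using \<open>e > 0\<close> \<open>u \<noteq> 0\<close> by (simp add: dist_norm)
  then have "y \<in> convex hull {a, b, c}" using e \<open>e > 0\<close> by auto
  then have "s * orient q p y \<le> s * orient q p x"
    using convex_hull_orient_le le by blast
  moreover have "s * orient q p y = s * orient q p x + d * s^2 * K"
    unfolding y_def u_def K_def orient_def by (simp add: power2_eq_square algebra_simps)
  moreover have "d * s^2 * K > 0" using \<open>d > 0\<close> \<open>s \<noteq> 0\<close> \<open>K > 0\<close> by simp
  ultimately show False by simp
qed

section \<open>Convex chains\<close>

definition convex_chain :: "real \<Rightarrow> pt list \<Rightarrow> bool" where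
  "convex_chain s L \<longleftrightarrow>
     (\<forall>i j k. i < j \<longrightarrow> j < k \<longrightarrow> k < length L \<longrightarrow> 0 < s * orient (L!i) (L!j) (L!k))"

lemma convex_chain_rev: "convex_chain s (rev L) \<Longrightarrow> convex_chain (- s) L"
  unfolding convex_chain_def
proof (intro allI impI)
  fix i j k assume h: "\<forall>i j k. i < j \<longrightarrow> j < k \<longrightarrow> k < length (rev L) \<longrightarrow>
      0 < s * orient (rev L ! i) (rev L ! j) (rev L ! k)" and "i < j" "j < k" "k < length L"
  then have "0 < s * orient (rev L ! (length L - Suc k)) (rev L ! (length L - Suc j))
      (rev L ! (length L - Suc i))"
    by auto
  then have "0 < s * orient (L ! k) (L ! j) (L ! i)"
    using \<open>i < j\<close> \<open>j < k\<close> \<open>k < length L\<close> by (simp add: rev_nth)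
  then show "0 < - s * orient (L ! i) (L ! j) (L ! k)"
    by (simp add: orient_reverse[of "L ! k"])
qed

lemma convex_chain_take: "convex_chain s L \<Longrightarrow> convex_chain s (take n L)"
  unfolding convex_chain_def by simp

lemma convex_chain_drop: "convex_chain s L \<Longrightarrow> convex_chain s (drop n L)"
  unfolding convex_chain_def
proof (intro allI impI)
  fix i j k assume "\<forall>i j k. i < j \<longrightarrow> j < k \<longrightarrow> k < length L \<longrightarrow> 0 < s * orient (L!i) (L!j) (L!k)"
    and "i < j" "j < k" "k < length (drop n L)"
  then have "0 < s * orient (L ! (n + i)) (L ! (n + j)) (L ! (n + k))" by simp
  then show "0 < s * orient (drop n L ! i) (drop n L ! j) (drop n L ! k)"
    using \<open>k < length (drop n L)\<close> \<open>i < j\<close> \<open>j < k\<close> by simp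
qed

lemma ccw_cyclicD:
  assumes "ccw_cyclic L" "e < length L" "z \<in> set L" "z \<noteq> L ! e" "z \<noteq> L ! ((e + 1) mod length L)"
  shows "0 < orient (L ! e) (L ! ((e + 1) mod length L)) z"
  using assms unfolding ccw_cyclic_def by blast

lemma ccw_cyclic_rotate:
  assumes "ccw_cyclic L" shows "ccw_cyclic (rotate m L)"
  unfolding ccw_cyclic_def
proof (intro conjI allI impI ballI)
  show "distinct (rotate m L)" using assms unfolding ccw_cyclic_def by simp
next
  fix i z
  assume i: "i < length (rotate m L)" and z: "z \<in> set (rotate m L)"
    and nz: "z \<noteq> rotate m L ! i \<and> z \<noteq> rotate m L ! ((i + 1) mod length (rotate m L))"
  let ?n = "length L"
  have "?n > 0" using i by auto
  have r1: "rotate m L ! i = L ! ((m + i) mod ?n)" using i by (simp add: nth_rotate)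
  have r2: "rotate m L ! ((i + 1) mod length (rotate m L)) = L ! (((m + i) mod ?n + 1) mod ?n)"
    using i \<open>?n > 0\<close> by (simp add: nth_rotate mod_add_right_eq mod_Suc_eq add.assoc)
  show "0 < orient (rotate m L ! i) (rotate m L ! ((i + 1) mod length (rotate m L))) z"
    unfolding r1 r2 using ccw_cyclicD[OF assms, of "(m + i) mod ?n" z] i z nz r1 r2 \<open>?n > 0\<close> by simp
qed

text \<open>Walking along the polygon from its first vertex, each new vertex is left of the
  diagonals already drawn; the inductive step is the Pluecker identity with the first edge.\<close>
lemma ccw_cyclic_orient_from_hd:
  assumes ccw: "ccw_cyclic L" and "0 < t" "t < u" "u < length L"
  shows "0 < orient (L!0) (L!t) (L!u)"
proof -
  let ?n = "length L" and ?a = "L ! 0"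
  have neq: "L ! i \<noteq> L ! k" if "i < ?n" "k < ?n" "i \<noteq> k" for i k
    using ccw that unfolding ccw_cyclic_def by (simp add: nth_eq_iff_index_eq)
  have step: "0 < orient ?a (L!k) (L!Suc k)" if "0 < k" "Suc k < ?n" for k
  proof -
    have "L \<noteq> []" using that by auto
    have "0 < orient (L!k) (L!Suc k) ?a"
      using ccw_cyclicD[OF ccw, of k ?a] neq[of 0 k] neq[of 0 "Suc k"] \<open>L \<noteq> []\<close> that by simp
    then show ?thesis using orient_rotate by metis
  qed
  have first: "0 < orient ?a (L!1) (L!k)" if "1 < k" "k < ?n" for k
  proof -
    have "L \<noteq> []" using that by auto
    then show ?thesis
      using ccw_cyclicD[OF ccw, of 0 "L!k"] neq[of k 0] neq[of k 1] nth_mem[of k L] that by simp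
  qed
  show ?thesis
    using \<open>t < u\<close> \<open>u < ?n\<close>
  proof (induction u)
    case 0 then show ?case by simp
  next
    case (Suc u)
    show ?case
    proof (cases "t = u")
      case True then show ?thesis using step \<open>0 < t\<close> Suc.prems by simp
    next
      case False
      then have IH: "0 < orient ?a (L!t) (L!u)" using Suc by simp
      show ?thesis
      proof (cases "t = 1")
        case True then show ?thesis using first Suc.prems by simp
      next
        case False
        have "orient ?a (L!1) (L!u) * orient ?a (L!t) (L!Suc u) =
            orient ?a (L!1) (L!t) * orient ?a (L!u) (L!Suc u) + orient ?a (L!1) (L!Suc u) * orient ?a (L!t) (L!u)"
          by (rule orient_pluecker)
        also have "\<dots> > 0"
          using first[of t] first[of u] first[of "Suc u"] step[of u] IH False \<open>0 < t\<close> \<open>t \<noteq> u\<close> Suc.prems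
          by (simp add: add_pos_pos)
        finally show ?thesis
          using first[of u] False \<open>0 < t\<close> \<open>t \<noteq> u\<close> Suc.prems by (simp add: zero_less_mult_iff)
      qed
    qed
  qed
qed

lemma ccw_cyclic_convex_chain:
  assumes "ccw_cyclic L"
  shows "convex_chain 1 L"
  unfolding convex_chain_def
proof (intro allI impI)
  fix i j k assume "i < j" "j < k" "k < length L"
  then have "0 < length L" "L \<noteq> []" by auto
  have "rotate i L ! 0 = L ! i" "rotate i L ! (j - i) = L ! j" "rotate i L ! (k - i) = L ! k"
    using \<open>i < j\<close> \<open>j < k\<close> \<open>k < length L\<close> \<open>0 < length L\<close> \<open>L \<noteq> []\<close>
    by (simp_all add: nth_rotate)
  moreover have "0 < orient (rotate i L ! 0) (rotate i L ! (j - i)) (rotate i L ! (k - i))"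
    using ccw_cyclic_orient_from_hd[OF ccw_cyclic_rotate[OF assms]] \<open>i < j\<close> \<open>j < k\<close> \<open>k < length L\<close>
    by simp
  ultimately show "0 < 1 * orient (L ! i) (L ! j) (L ! k)" by simp
qed

section \<open>Sub-polygons of the hull\<close>

text \<open>L is the boundary chain from p = hd L to q = last L of a convex sub-polygon of the hull
  of S, oriented by the sign s; all other points of S lie strictly beyond each of its chords.\<close>
definition hull_chain :: "pt set \<Rightarrow> real \<Rightarrow> pt list \<Rightarrow> bool" where
  "hull_chain S s L \<longleftrightarrow> distinct L \<and> s \<noteq> 0 \<and> set L \<subseteq> S \<and> convex_chain s L \<and>
     (\<forall>v \<in> S - set L. \<forall>i k. i < k \<longrightarrow> k < length L \<longrightarrow> 0 < s * orient (L!i) (L!k) v)"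

lemma hull_chainD:
  assumes "hull_chain S s L"
  shows "distinct L" "s \<noteq> 0" "set L \<subseteq> S"
    and "\<And>i j k. i < j \<Longrightarrow> j < k \<Longrightarrow> k < length L \<Longrightarrow> 0 < s * orient (L!i) (L!j) (L!k)"
    and "\<And>v i k. v \<in> S - set L \<Longrightarrow> i < k \<Longrightarrow> k < length L \<Longrightarrow> 0 < s * orient (L!i) (L!k) v"
  using assms unfolding hull_chain_def convex_chain_def by blast+

lemma hull_chain_take:
  assumes ch: "hull_chain S s L" and j: "Suc j < length L"
  shows "hull_chain S s (take (Suc j) L)"
proof -
  have "convex_chain s (take (Suc j) L)"
    using ch unfolding hull_chain_def by (simp add: convex_chain_take)
  moreover have "0 < s * orient (take (Suc j) L ! i) (take (Suc j) L ! k) v"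
    if v: "v \<in> S - set (take (Suc j) L)" and "i < k" "k < length (take (Suc j) L)" for v i k
  proof (cases "v \<in> set L")
    case False then show ?thesis using hull_chainD(5)[OF ch, of v i k] that by auto
  next
    case True
    then obtain m where m: "m < length L" "L ! m = v" by (auto simp: in_set_conv_nth)
    have "\<not> m < Suc j"
    proof
      assume "m < Suc j"
      then have "v \<in> set (take (Suc j) L)" using m j by (auto simp: in_set_conv_nth intro!: exI[of _ m])
      then show False using v by auto
    qed
    then show ?thesis using hull_chainD(4)[OF ch, of i k m] m that by auto
  qed
  ultimately show ?thesis using ch unfolding hull_chain_def by (auto dest: in_set_takeD)
qed

lemma hull_chain_rev_drop:
  assumes ch: "hull_chain S s L" and j: "Suc j < length L"
  shows "hull_chain S (- s) (rev (drop (Suc j) L))"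
proof -
  define R where "R = rev (drop (Suc j) L)"
  define m where "m = length L - Suc j"
  have len: "length R = m" unfolding R_def m_def by simp
  have nth: "R ! i = L ! (Suc j + (m - Suc i))" if "i < m" for i
    using that j unfolding R_def m_def by (simp add: rev_nth)
  have "convex_chain (- s) R"
    using ch convex_chain_rev[of s R] unfolding hull_chain_def R_def by (simp add: convex_chain_drop)
  moreover have "\<forall>v \<in> S - set R. \<forall>i k. i < k \<longrightarrow> k < length R \<longrightarrow> 0 < - s * orient (R!i) (R!k) v"
  proof (intro ballI allI impI)
    fix v i k assume v: "v \<in> S - set R" and "i < k" "k < length R"
    then have "k < m" using len by simp
    have "- s * orient (R ! i) (R ! k) v = s * orient (R ! k) (R ! i) v"
      by (simp add: orient_swap12[of "R ! i"])
    also have "\<dots> = s * orient (L ! (Suc j + (m - Suc k))) (L ! (Suc j + (m - Suc i))) v"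
      using nth \<open>i < k\<close> \<open>k < m\<close> by simp
    also have "\<dots> > 0"
    proof (cases "v \<in> set L")
      case False
      then show ?thesis
        by (intro hull_chainD(5)[OF ch]) (use v \<open>i < k\<close> \<open>k < m\<close> j in \<open>auto simp: m_def\<close>)
    next
      case True
      then obtain c where c: "c < length L" "L ! c = v" by (auto simp: in_set_conv_nth)
      have "\<not> Suc j \<le> c"
      proof
        assume "Suc j \<le> c"
        then have "v \<in> set (drop (Suc j) L)" using c
          by (auto simp: in_set_conv_nth intro!: exI[of _ "c - Suc j"])
        then have "v \<in> set R" unfolding R_def by simp
        then show False using v by auto
      qed
      then have "0 < s * orient (L ! c) (L ! (Suc j + (m - Suc k))) (L ! (Suc j + (m - Suc i)))"
        using \<open>i < k\<close> \<open>k < m\<close> j unfolding m_def by (intro hull_chainD(4)[OF ch]) auto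
      then show ?thesis using c(2) by (simp add: orient_rotate[of v])
    qed
    finally show "0 < - s * orient (R ! i) (R ! k) v" .
  qed
  moreover have "distinct R" "set R \<subseteq> S"
    using hull_chainD(1,3)[OF ch] unfolding R_def by (auto dest: in_set_dropD)
  ultimately show ?thesis
    using hull_chainD(2)[OF ch] unfolding hull_chain_def R_def by simp
qed

lemma hull_chain_hd_last:
  assumes ch: "hull_chain S s L" and "v \<in> set L"
  shows "0 \<le> s * orient (hd L) v (last L)"
proof -
  obtain t where t: "t < length L" "L ! t = v" using assms by (auto simp: in_set_conv_nth)
  have "L \<noteq> []" using assms by auto
  then have "hd L = L ! 0" "last L = L ! (length L - 1)" by (auto simp: hd_conv_nth last_conv_nth)
  moreover have "0 < s * orient (L ! 0) (L ! t) (L ! (length L - 1))"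
    if "t \<noteq> 0" "t \<noteq> length L - 1"
    using hull_chainD(4)[OF ch, of 0 t "length L - 1"] that t by simp
  ultimately show ?thesis using t by (cases "t = 0 \<or> t = length L - 1") auto
qed

lemma hull_chain_edge:
  assumes ch: "hull_chain S s L" and j: "Suc j < length L" and v: "v \<in> S"
  shows "0 \<le> s * orient (L ! j) (L ! Suc j) v"
proof (cases "v \<in> set L")
  case False then show ?thesis using hull_chainD(5)[OF ch, of v j "Suc j"] v j by auto
next
  case True
  then obtain t where t: "t < length L" "L ! t = v" by (auto simp: in_set_conv_nth)
  consider "t < j" | "t = j" | "t = Suc j" | "Suc j < t" by linarith
  then show ?thesis
  proof cases
    case 1 then show ?thesis
      using hull_chainD(4)[OF ch, of t j "Suc j"] t j by (simp add: orient_rotate[of v])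
  next
    case 4 then show ?thesis using hull_chainD(4)[OF ch, of j "Suc j" t] t by simp
  qed (use t in simp_all)
qed

lemma hull_chain_hd_ne_last:
  assumes "hull_chain S s L" "2 \<le> length L"
  shows "hd L \<noteq> last L"
proof -
  have "L ! 0 \<noteq> L ! (length L - 1)"
    using hull_chainD(1)[OF assms(1)] assms(2) by (subst nth_eq_iff_index_eq) auto
  moreover have "L \<noteq> []" using assms(2) by auto
  ultimately show ?thesis by (simp add: hd_conv_nth last_conv_nth)
qed

text \<open>Here p = hd L, q = last L, r = L!j and s = L!Suc j (called t in the proof, as s is the
  sign).  The quadrangle p q s r is split along the diagonal ps into two triangles.\<close>
lemma in_quadrangle_if_not_cut_off:
  assumes ch: "hull_chain S s L" and j: "Suc j < length L"
    and rs: "0 \<le> s * orient (L!j) (L!Suc j) z"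
    and pq: "0 < s * orient (hd L) z (last L)"
    and pr: "\<not> 0 < s * orient (hd L) z (L!j)"
    and qs: "\<not> 0 < - s * orient (last L) z (L!Suc j)"
  shows "z \<in> convex hull {hd L, last L, L!Suc j, L!j}"
proof -
  have "L \<noteq> []" using j by auto
  define p q r t where "p = L ! 0" and "q = L ! (length L - 1)" and "r = L ! j" and "t = L ! Suc j"
  have hd: "hd L = p" and lst: "last L = q"
    using \<open>L \<noteq> []\<close> unfolding p_def q_def by (auto simp: hd_conv_nth last_conv_nth)
  note pq = pq[unfolded hd lst] and pr = pr[unfolded hd lst r_def[symmetric]]
    and qs = qs[unfolded hd lst t_def[symmetric]] and rs = rs[unfolded r_def[symmetric] t_def[symmetric]]
  show ?thesis unfolding hd lst r_def[symmetric] t_def[symmetric]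
  proof (cases "0 \<le> s * orient p t z")
    case True
    show "z \<in> convex hull {p, q, t, r}"
    proof (cases "Suc j = length L - 1")
      case True
      then have "t = q" unfolding t_def q_def by simp
      then show ?thesis using \<open>0 \<le> s * orient p t z\<close> pq by (simp add: orient_swap23[of p z q])
    next
      case False
      have ptq: "0 < s * orient p t q"
        unfolding p_def t_def q_def using hull_chainD(4)[OF ch, of 0 "Suc j" "length L - 1"] False j by simp
      have "0 \<le> s * orient t q z" using qs orient_rotate[of t q z] by simp
      moreover have "0 \<le> s * orient q p z" using pq orient_rotate[of q p z] by simp
      ultimately have "z \<in> convex hull {p, t, q}"
        using in_triangle_if_orient_nonneg[OF ptq \<open>0 \<le> s * orient p t z\<close>] by blast
      moreover have "convex hull {p, t, q} \<subseteq> convex hull {p, q, t, r}" by (rule hull_mono) auto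
      ultimately show ?thesis by auto
    qed
  next
    case False
    show "z \<in> convex hull {p, q, t, r}"
    proof (cases "j = 0")
      case True
      then have "r = p" unfolding r_def p_def by simp
      then show ?thesis using rs False by simp
    next
      case False
      have prt: "0 < s * orient p r t"
        unfolding p_def t_def r_def using hull_chainD(4)[OF ch, of 0 j "Suc j"] False j by simp
      have "0 \<le> s * orient p r z" using pr by (simp add: orient_swap23[of p r z])
      moreover have "0 \<le> s * orient t p z"
        using \<open>\<not> 0 \<le> s * orient p t z\<close> by (simp add: orient_swap12[of t p z])
      ultimately have "z \<in> convex hull {p, r, t}"
        using in_triangle_if_orient_nonneg[OF prt _ rs] by blast
      moreover have "convex hull {p, r, t} \<subseteq> convex hull {p, q, t, r}" by (rule hull_mono) auto
      ultimately show ?thesis by auto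
    qed
  qed
qed

section \<open>Quadrangle trees\<close>

lemma take_rev_drop_ends:
  assumes "Suc j < length L"
  shows "hd (take (Suc j) L) = hd L" "last (take (Suc j) L) = L ! j"
    and "hd (rev (drop (Suc j) L)) = last L" "last (rev (drop (Suc j) L)) = L ! Suc j"
proof -
  show "hd (take (Suc j) L) = hd L" using assms by (cases L) auto
  show "last (take (Suc j) L) = L ! j" using assms by (subst last_conv_nth) (auto simp: min_def)
qed (use assms in \<open>auto simp: hd_rev last_rev hd_drop_conv_nth\<close>)

text \<open>Descend from the root: a point beyond the rooted edge either lies in the root quadrangle
  or is cut off by one of its diagonals and so lies beyond the rooted edge of a child.\<close>
lemma qtree_of_covers:
  assumes "qtree_of L T" "hull_chain S s L" "z \<in> P" "z \<in> convex hull S"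
    and "0 < s * orient (hd L) z (last L)"
  shows "\<exists>\<pi> nd. (\<pi>, nd) \<in> qnodes T \<and> z \<in> pop P nd"
  using assms
proof (induction arbitrary: s rule: qtree_of.induct)
  case (1 j L tL tR s)
  note ch = "1.prems"(1) and j = "1.hyps"(1) and pq = "1.prems"(4)
  have rs: "0 \<le> s * orient (L!j) (L!Suc j) z"
    by (rule convex_hull_orient_ge[OF _ "1.prems"(3)]) (rule hull_chain_edge[OF ch j])
  have "L \<noteq> []" using j by auto
  consider (here) "z \<in> convex hull {hd L, last L, L!Suc j, L!j}"
    | (left) "0 < s * orient (hd L) z (L!j)" | (right) "0 < - s * orient (last L) z (L!Suc j)"
    using in_quadrangle_if_not_cut_off[OF ch j rs pq] by blast
  then show ?case
  proof cases
    case here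
    have "z \<notin> affine hull {hd L, last L}"
      using pq orient_in_affine_hull orient_swap23[of "hd L" z "last L"] by fastforce
    then have "z \<in> pop P (hd L, last L, L!Suc j, L!j)"
      unfolding pop_def using here "1.prems"(2) by auto
    then show ?thesis by (intro exI[of _ "[]"] exI[of _ "(hd L, last L, L!Suc j, L!j)"]) simp
  next
    case left
    have "j \<noteq> 0"
    proof
      assume "j = 0"
      then have "L ! j = hd L" using \<open>L \<noteq> []\<close> by (simp add: hd_conv_nth)
      then show False using left by simp
    qed
    then obtain \<pi> nd where "(\<pi>, nd) \<in> qnodes tL" "z \<in> pop P nd"
      using "1.IH"(1) hull_chain_take[OF ch j] "1.prems"(2,3) left take_rev_drop_ends[OF j] by auto
    then show ?thesis by (intro exI[of _ "False # \<pi>"] exI[of _ nd]) force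
  next
    case right
    have "Suc j \<noteq> length L - 1"
    proof
      assume "Suc j = length L - 1"
      then have "L ! Suc j = last L" using \<open>L \<noteq> []\<close> by (simp add: last_conv_nth)
      then show False using right by simp
    qed
    then obtain \<pi> nd where "(\<pi>, nd) \<in> qnodes tR" "z \<in> pop P nd"
      using "1.IH"(2) hull_chain_rev_drop[OF ch j] "1.prems"(2,3) right take_rev_drop_ends[OF j] by auto
    then show ?thesis by (intro exI[of _ "True # \<pi>"] exI[of _ nd]) force
  qed
qed

lemma qnodes_rooted_subtree:
  "qtree_of L T \<Longrightarrow> hull_chain S s L \<Longrightarrow> (\<pi>, nd) \<in> qnodes T \<Longrightarrow>
   \<exists>L' s' j tL tR. qtree_of L' (QNode (hd L') (last L') (L'!Suc j) (L'!j) tL tR) \<and>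
     hull_chain S s' L' \<and> Suc j < length L' \<and> nd = (hd L', last L', L'!Suc j, L'!j) \<and>
     (\<forall>\<rho> nd'. (\<rho>, nd') \<in> qnodes (QNode (hd L') (last L') (L'!Suc j) (L'!j) tL tR) \<longrightarrow>
        (\<pi> @ \<rho>, nd') \<in> qnodes T)"
proof (induction arbitrary: s \<pi> rule: qtree_of.induct)
  case (1 j L tL tR s \<pi>)
  let ?T = "QNode (hd L) (last L) (L ! Suc j) (L ! j) tL tR"
  have T: "qtree_of L ?T"
    by (rule qtree_of.intros) (use "1.hyps" "1.IH" in blast)+
  from "1.prems"(2) consider "\<pi> = []" "nd = (hd L, last L, L ! Suc j, L ! j)"
    | \<pi>' where "\<pi> = False # \<pi>'" "(\<pi>', nd) \<in> qnodes tL"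
    | \<pi>' where "\<pi> = True # \<pi>'" "(\<pi>', nd) \<in> qnodes tR"
    by auto
  then show ?case
  proof cases
    case 1
    then show ?thesis using T "1.prems"(1) "1.hyps"(1)
      by (intro exI[of _ L] exI[of _ s] exI[of _ j] exI[of _ tL] exI[of _ tR]) auto
  next
    case (2 \<pi>')
    have lift: "(\<pi> @ \<rho>, nd') \<in> qnodes ?T" if "(\<pi>' @ \<rho>, nd') \<in> qnodes tL" for \<rho> nd'
      using that 2(1) by force
    have "tL \<noteq> QLeaf" using 2 by auto
    then show ?thesis
      using "1.IH"(1) hull_chain_take[OF "1.prems"(1) "1.hyps"(1)] 2(2) lift by blast
  next
    case (3 \<pi>')
    have lift: "(\<pi> @ \<rho>, nd') \<in> qnodes ?T" if "(\<pi>' @ \<rho>, nd') \<in> qnodes tR" for \<rho> nd'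
      using that 3(1) by force
    have "tR \<noteq> QLeaf" using 3 by auto
    then show ?thesis
      using "1.IH"(2) hull_chain_rev_drop[OF "1.prems"(1) "1.hyps"(1)] 3(2) lift by blast
  qed
qed

definition line_dist :: "pt \<times> pt \<times> pt \<times> pt \<Rightarrow> pt \<Rightarrow> real" where
  "line_dist nd x = (case nd of (p, q, s, r) \<Rightarrow> infdist x (affine hull {p, q}))"

lemma infdist_line_less:
  assumes "p \<noteq> q" "0 < s * orient q p x" "s * orient q p x < s * orient q p v"
  shows "infdist x (affine hull {p, q}) < infdist v (affine hull {p, q})"
proof -
  have "\<bar>s\<bar> * \<bar>orient q p x\<bar> < \<bar>s\<bar> * \<bar>orient q p v\<bar>"
    using assms(2,3) by (simp add: abs_mult[symmetric])
  then have "\<bar>orient p q x\<bar> < \<bar>orient p q v\<bar>"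
    by (simp add: orient_swap12[of q p] mult_less_cancel_left)
  then show ?thesis
    using assms(1) by (simp add: infdist_line divide_strict_right_mono)
qed

lemma pop_beyond_rooted_edge:
  assumes ch: "hull_chain S s L" and j: "Suc j < length L"
    and x: "x \<in> pop P (hd L, last L, L!Suc j, L!j)"
  shows "0 < s * orient (last L) (hd L) x"
proof -
  let ?p = "hd L" and ?q = "last L"
  have "?p \<noteq> ?q" using hull_chain_hd_ne_last[OF ch] j by simp
  have x: "x \<in> convex hull {?p, ?q, L!Suc j, L!j}" "x \<notin> affine hull {?p, ?q}"
    using x unfolding pop_def by auto
  have "0 \<le> s * orient ?q ?p x"
  proof (rule convex_hull_orient_ge[OF _ x(1)])
    fix w assume "w \<in> {?p, ?q, L!Suc j, L!j}"
    moreover have "L \<noteq> []" using j by auto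
    ultimately have "w \<in> set L" using j by auto
    then show "0 \<le> s * orient ?q ?p w"
      using hull_chain_hd_last[OF ch] orient_rotate[of ?q ?p w] by simp
  qed
  moreover have "orient ?q ?p x \<noteq> 0"
    using x(2) orient_eq_0_iff_in_line[OF \<open>?p \<noteq> ?q\<close>] orient_swap12[of ?q ?p x] by simp
  ultimately show ?thesis using hull_chainD(2)[OF ch] by (simp add: order_le_less)
qed

text \<open>The vertex v of abc farthest beyond the rooted edge pq of the node of x is covered by the
  subtree below that node; if it is covered by the node itself, it is farther from pq than x.\<close>
lemma qnode_vertex_above:
  assumes Q: "qtree_of L Q" and ch: "hull_chain S s L" and PS: "P \<subseteq> convex hull S"
    and nd: "(\<pi>, nd) \<in> qnodes Q" "x \<in> pop P nd"
    and abc: "{a, b, c} \<subseteq> P" and xi: "x \<in> interior (convex hull {a, b, c})"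
  shows "\<exists>v\<in>{a, b, c}. \<exists>\<pi>' nd'. (\<pi>', nd') \<in> qnodes Q \<and> v \<in> pop P nd' \<and>
     ((\<exists>z. z \<noteq> [] \<and> \<pi>' = \<pi> @ z) \<or> (\<pi>' = \<pi> \<and> nd' = nd \<and> line_dist nd x < line_dist nd v))"
proof -
  obtain L' s' j tL tR where
    T': "qtree_of L' (QNode (hd L') (last L') (L'!Suc j) (L'!j) tL tR)" and ch': "hull_chain S s' L'"
    and j: "Suc j < length L'" and nd_eq: "nd = (hd L', last L', L'!Suc j, L'!j)"
    and lift: "\<And>\<rho> nd'. (\<rho>, nd') \<in> qnodes (QNode (hd L') (last L') (L'!Suc j) (L'!j) tL tR) \<Longrightarrow>
        (\<pi> @ \<rho>, nd') \<in> qnodes Q"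
    using qnodes_rooted_subtree[OF Q ch nd(1)] by blast
  define p q where "p = hd L'" and "q = last L'"
  have "p \<noteq> q" unfolding p_def q_def using hull_chain_hd_ne_last[OF ch'] j by simp
  have x_inner: "0 < s' * orient q p x"
    using pop_beyond_rooted_edge[OF ch' j] nd(2) unfolding nd_eq p_def q_def by simp
  obtain v where v: "v \<in> {a, b, c}" "s' * orient q p x < s' * orient q p v"
    using interior_triangle_vertex_beyond[OF xi \<open>p \<noteq> q\<close> hull_chainD(2)[OF ch']] by blast
  have "v \<in> P" using v(1) abc by auto
  moreover have "0 < s' * orient (hd L') v (last L')"
    using v(2) x_inner orient_rotate[of q p v] unfolding p_def q_def by simp
  ultimately obtain \<rho> nd' where
    \<rho>: "(\<rho>, nd') \<in> qnodes (QNode (hd L') (last L') (L'!Suc j) (L'!j) tL tR)" "v \<in> pop P nd'"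
    using qtree_of_covers[OF T' ch'] PS by blast
  show ?thesis
  proof (cases "\<rho> = []")
    case False
    then show ?thesis using v(1) lift[OF \<rho>(1)] \<rho>(2) by blast
  next
    case True
    have "line_dist nd x < line_dist nd v"
      unfolding line_dist_def nd_eq using infdist_line_less[OF \<open>p \<noteq> q\<close> x_inner v(2)]
      by (simp add: p_def q_def)
    moreover have "(\<pi>, nd') \<in> qnodes Q" using lift[OF \<rho>(1)] True by simp
    moreover have "nd' = nd" using \<rho>(1) True nd_eq by auto
    ultimately show ?thesis using v(1) \<rho>(2) by blast
  qed
qed

section \<open>The hull of a finite point set\<close>

lemma subset_convex_hull_chP:
  assumes "finite P"
  shows "P \<subseteq> convex hull (chP P)"
proof -
  have "{x. x extreme_point_of (convex hull P)} \<subseteq> chP P"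
  proof
    fix x assume "x \<in> {x. x extreme_point_of (convex hull P)}"
    then have x: "x extreme_point_of (convex hull P)" by simp
    then have "x \<in> P" "x \<notin> interior (convex hull P)" "x \<in> closure (convex hull P)"
      using extreme_point_of_convex_hull extreme_point_not_in_interior closure_subset
      unfolding extreme_point_of_def by blast+
    then show "x \<in> chP P" unfolding chP_def frontier_def by simp
  qed
  then have "convex hull {x. x extreme_point_of (convex hull P)} \<subseteq> convex hull (chP P)"
    by (rule hull_mono)
  then show ?thesis
    using hull_subset[of P convex] Krein_Milman_polytope[OF assms] by blast
qed

lemma qtree_for_hull_chain:
  assumes "qtree_for P Q"
  obtains L s where "qtree_of L Q" "hull_chain (chP P) s L" "set L = chP P" "2 \<le> length L"
proof -
  obtain L where L: "set L = chP P" "2 \<le> length L" "ccw_cyclic L \<or> ccw_cyclic (rev L)" "qtree_of L Q"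
    using assms unfolding qtree_for_def by blast
  have "distinct L" using L(3) unfolding ccw_cyclic_def by auto
  obtain s where "s \<noteq> 0" "convex_chain s L"
  proof (cases "ccw_cyclic L")
    case True then show ?thesis using that[of 1] ccw_cyclic_convex_chain by auto
  next
    case False
    then have "convex_chain 1 (rev L)" using L(3) ccw_cyclic_convex_chain by auto
    then show ?thesis using that[of "-1"] convex_chain_rev by fastforce
  qed
  then have "hull_chain (chP P) s L" unfolding hull_chain_def L(1)[symmetric] using \<open>distinct L\<close> by simp
  then show ?thesis using that L by blast
qed

lemma gen_pos_not_in_line:
  assumes "gen_pos P" "{x, p, q} \<subseteq> P" "x \<noteq> p" "x \<noteq> q" "p \<noteq> q"
  shows "x \<notin> affine hull {p, q}"
proof
  assume "x \<in> affine hull {p, q}"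
  moreover have "p \<in> affine hull {p, q}" "q \<in> affine hull {p, q}" by (simp_all add: hull_inc)
  ultimately have "{x, p, q} \<subseteq> affine hull {p, q}" by simp
  then have "collinear {x, p, q}" unfolding collinear_affine_hull by (intro exI)
  then show False using assms(1)[unfolded gen_pos_def, rule_format, of x p q] assms(2-5) by simp
qed

text \<open>An interior point lies strictly inside the root edge pq of the tree, since by general
  position it is not on the line pq.\<close>
lemma qtree_for_covers:
  assumes fin: "finite P" and gp: "gen_pos P" and Q: "qtree_for P Q" and x: "x \<in> P - chP P"
  shows "\<exists>\<pi> nd. (\<pi>, nd) \<in> qnodes Q \<and> x \<in> pop P nd"
proof -
  obtain L s where T: "qtree_of L Q" and ch: "hull_chain (chP P) s L"
    and L: "set L = chP P" "2 \<le> length L"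
    by (rule qtree_for_hull_chain[OF Q])
  let ?p = "hd L" and ?q = "last L"
  have "?p \<noteq> ?q" using hull_chain_hd_ne_last[OF ch L(2)] .
  have "L \<noteq> []" using L(2) by auto
  have pq: "?p \<in> chP P" "?q \<in> chP P"
    using L(1) hd_in_set[OF \<open>L \<noteq> []\<close>] last_in_set[OF \<open>L \<noteq> []\<close>] by simp_all
  have xS: "x \<in> convex hull (chP P)" using subset_convex_hull_chP[OF fin] x by blast
  have nonneg: "0 \<le> s * orient ?q ?p x"
  proof (rule convex_hull_orient_ge[OF _ xS])
    fix v assume "v \<in> chP P"
    then show "0 \<le> s * orient ?q ?p v"
      using hull_chain_hd_last[OF ch] L(1) orient_rotate[of ?q ?p v] by simp
  qed
  have "x \<noteq> ?p" "x \<noteq> ?q" using x pq by auto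
  moreover have "{x, ?p, ?q} \<subseteq> P" using x pq unfolding chP_def by auto
  ultimately have "x \<notin> affine hull {?p, ?q}" using gen_pos_not_in_line[OF gp] \<open>?p \<noteq> ?q\<close> by blast
  then have "orient ?q ?p x \<noteq> 0"
    using orient_eq_0_iff_in_line[OF \<open>?p \<noteq> ?q\<close>] orient_swap12[of ?q ?p x] by simp
  with nonneg have "0 < s * orient ?p x ?q"
    using hull_chainD(2)[OF ch] orient_rotate[of ?q ?p x] by (simp add: order_le_less)
  then show ?thesis using qtree_of_covers[OF T ch] x xS by blast
qed

lemma qtree_for_vertex_above:
  assumes "finite P" "qtree_for P Q" "(\<pi>, nd) \<in> qnodes Q" "x \<in> pop P nd"
    and "{a, b, c} \<subseteq> P" "x \<in> interior (convex hull {a, b, c})"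
  shows "\<exists>v\<in>{a, b, c}. \<exists>\<pi>' nd'. (\<pi>', nd') \<in> qnodes Q \<and> v \<in> pop P nd' \<and>
     ((\<exists>z. z \<noteq> [] \<and> \<pi>' = \<pi> @ z) \<or> (\<pi>' = \<pi> \<and> nd' = nd \<and> line_dist nd x < line_dist nd v))"
proof -
  obtain L s where "qtree_of L Q" "hull_chain (chP P) s L" "set L = chP P" "2 \<le> length L"
    by (rule qtree_for_hull_chain[OF assms(2)])
  from qnode_vertex_above[OF this(1,2) subset_convex_hull_chP[OF assms(1)] assms(3-6)]
  show ?thesis .
qed

lemma leftmost_exists:
  assumes "finite S" "S \<noteq> {}"
  obtains a where "leftmost_in a S"
proof -
  define m where "m = Min (fst ` S)"
  define S1 where "S1 = {z \<in> S. fst z = m}"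
  have "m \<in> fst ` S" unfolding m_def using assms by simp
  then have "S1 \<noteq> {}" unfolding S1_def by auto
  moreover have "finite S1" unfolding S1_def using assms by simp
  ultimately have "Min (snd ` S1) \<in> snd ` S1" by simp
  then obtain a where a: "a \<in> S1" "snd a = Min (snd ` S1)" by auto
  have "fst a < fst z \<or> fst a = fst z \<and> snd a \<le> snd z" if "z \<in> S" for z
  proof -
    have "fst a \<le> fst z" using a(1) assms that unfolding S1_def m_def by simp
    moreover have "snd a \<le> snd z" if "fst z = fst a"
      using a \<open>finite S1\<close> \<open>z \<in> S\<close> that unfolding S1_def by simp
    ultimately show ?thesis by (cases "fst z = fst a") auto
  qed
  then show ?thesis using that a(1) unfolding leftmost_in_def S1_def by blast
qed

lemma qtree_for_hull_cycle:
  assumes "finite P" "qtree_for P Q"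
  obtains L where "set L = chP P" "ccw_cyclic L" "L \<noteq> []" "leftmost_in (hd L) (chP P)"
proof -
  obtain L0 where L0: "set L0 = chP P" "2 \<le> length L0" "ccw_cyclic L0 \<or> ccw_cyclic (rev L0)"
    using assms(2) unfolding qtree_for_def by blast
  define L' where "L' = (if ccw_cyclic L0 then L0 else rev L0)"
  have ccw: "ccw_cyclic L'" unfolding L'_def using L0(3) by auto
  have set: "set L' = chP P" unfolding L'_def using L0(1) by simp
  have "finite (chP P)" using assms(1) unfolding chP_def by simp
  moreover have "L0 \<noteq> []" using L0(2) by auto
  then have "chP P \<noteq> {}" unfolding L0(1)[symmetric] by simp
  ultimately obtain a where a: "leftmost_in a (chP P)" by (rule leftmost_exists)
  then have "a \<in> set L'" using set unfolding leftmost_in_def by simp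
  then obtain k where k: "k < length L'" "L' ! k = a" by (auto simp: in_set_conv_nth)
  moreover have "L' \<noteq> []" using k(1) by auto
  ultimately have "hd (rotate k L') = a" by (simp add: hd_rotate_conv_nth)
  moreover have "rotate k L' \<noteq> []" using \<open>L' \<noteq> []\<close> by simp
  ultimately show ?thesis
    using that[of "rotate k L'"] set ccw_cyclic_rotate[OF ccw] a by simp
qed

section \<open>Height of a point in a quadrangle tree\<close>

lemma qprecI:
  assumes "(\<pi>1, nd1) \<in> qnodes Q" "(\<pi>2, nd2) \<in> qnodes Q" "x \<in> pop P nd1" "y \<in> pop P nd2"
    and "(\<exists>z. z \<noteq> [] \<and> \<pi>2 = \<pi>1 @ z) \<or> (\<pi>1 = \<pi>2 \<and> line_dist nd1 x < line_dist nd1 y)"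
  shows "qprec P Q x y"
proof -
  have "line_dist nd1 x < line_dist nd1 y \<longleftrightarrow> (case nd1 of (p, q, s, r) \<Rightarrow>
      infdist x (affine hull {p, q}) < infdist y (affine hull {p, q}))"
    unfolding line_dist_def by (simp split: prod.split)
  then show ?thesis unfolding qprec_def using assms by blast
qed

definition containing_nodes :: "pt set \<Rightarrow> qtree \<Rightarrow> pt \<Rightarrow> (bool list \<times> pt \<times> pt \<times> pt \<times> pt) set" where
  "containing_nodes P Q x = {node \<in> qnodes Q. x \<in> pop P (snd node)}"

definition depth :: "pt set \<Rightarrow> qtree \<Rightarrow> pt \<Rightarrow> nat" where
  "depth P Q x = Max ((\<lambda>node. length (fst node)) ` containing_nodes P Q x)"

definition elevation :: "pt set \<Rightarrow> qtree \<Rightarrow> pt \<Rightarrow> real" where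
  "elevation P Q x = Max ((\<lambda>node. line_dist (snd node) x) `
     {node \<in> containing_nodes P Q x. length (fst node) = depth P Q x})"

text \<open>Points are compared by the depth of their deepest node and then by their distance from
  its rooted edge; taking maxima avoids having to show that populations are disjoint.\<close>
definition higher :: "pt set \<Rightarrow> qtree \<Rightarrow> pt \<Rightarrow> pt \<Rightarrow> bool" where
  "higher P Q x y \<longleftrightarrow> depth P Q x < depth P Q y \<or>
     (depth P Q x = depth P Q y \<and> elevation P Q x < elevation P Q y)"

lemma higher_trans: "higher P Q x y \<Longrightarrow> higher P Q y z \<Longrightarrow> higher P Q x z"
  unfolding higher_def by auto

lemma higher_irrefl: "\<not> higher P Q x x"
  unfolding higher_def by simp

lemma finite_qnodes: "finite (qnodes T)"
  by (induction T) auto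

lemma finite_containing_nodes: "finite (containing_nodes P Q x)"
  unfolding containing_nodes_def using finite_qnodes by simp

lemma depth_elevation_ge:
  assumes "(\<pi>, nd) \<in> qnodes Q" "y \<in> pop P nd"
  shows "length \<pi> \<le> depth P Q y"
    and "length \<pi> = depth P Q y \<Longrightarrow> line_dist nd y \<le> elevation P Q y"
proof -
  have mem: "(\<pi>, nd) \<in> containing_nodes P Q y" using assms unfolding containing_nodes_def by simp
  then show "length \<pi> \<le> depth P Q y"
    unfolding depth_def using finite_containing_nodes
    by (intro Max_ge) (auto intro!: image_eqI[of _ _ "(\<pi>, nd)"])
  assume "length \<pi> = depth P Q y"
  then show "line_dist nd y \<le> elevation P Q y"
    unfolding elevation_def using mem finite_containing_nodes
    by (intro Max_ge) (auto intro!: image_eqI[of _ _ "(\<pi>, nd)"])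
qed

lemma deepest_node_exists:
  assumes "(\<pi>0, nd0) \<in> qnodes Q" "x \<in> pop P nd0"
  obtains \<pi> nd where "(\<pi>, nd) \<in> qnodes Q" "x \<in> pop P nd"
    "length \<pi> = depth P Q x" "line_dist nd x = elevation P Q x"
proof -
  let ?N = "containing_nodes P Q x"
  let ?D = "{node \<in> ?N. length (fst node) = depth P Q x}"
  have "(\<pi>0, nd0) \<in> ?N" using assms unfolding containing_nodes_def by simp
  then have "?N \<noteq> {}" by blast
  then have "depth P Q x \<in> (\<lambda>node. length (fst node)) ` ?N"
    unfolding depth_def using finite_containing_nodes by (intro Max_in) auto
  then obtain node0 where "node0 \<in> ?D" by (auto simp del: fst_conv)
  then have "?D \<noteq> {}" by blast
  then have "elevation P Q x \<in> (\<lambda>node. line_dist (snd node) x) ` ?D"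
    unfolding elevation_def using finite_containing_nodes by (intro Max_in) auto
  then obtain node where "node \<in> ?D" "line_dist (snd node) x = elevation P Q x"
    by (auto simp del: fst_conv snd_conv)
  then show ?thesis
    using that[of "fst node" "snd node"] unfolding containing_nodes_def by simp
qed

text \<open>Start at a deepest node of x; the corner found by qtree_for_vertex_above lies either
  strictly deeper, or in the same node and farther from its rooted edge.\<close>
lemma witness_corner_above:
  assumes "finite P" "gen_pos P" "qtree_for P Q" "x \<in> P - chP P"
    and "{a, b, c} \<subseteq> P" "x \<in> interior (convex hull {a, b, c})"
  shows "\<exists>v\<in>{a, b, c}. qprec P Q x v \<and> higher P Q x v"
proof -
  obtain \<pi>0 nd0 where "(\<pi>0, nd0) \<in> qnodes Q" "x \<in> pop P nd0"
    using qtree_for_covers[OF assms(1-4)] by blast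
  then obtain \<pi> nd where nd: "(\<pi>, nd) \<in> qnodes Q" "x \<in> pop P nd"
    and deepest: "length \<pi> = depth P Q x" "line_dist nd x = elevation P Q x"
    by (rule deepest_node_exists)
  obtain v \<pi>' nd' where v: "v \<in> {a, b, c}" "(\<pi>', nd') \<in> qnodes Q" "v \<in> pop P nd'"
    and step: "(\<exists>z. z \<noteq> [] \<and> \<pi>' = \<pi> @ z) \<or> (\<pi>' = \<pi> \<and> nd' = nd \<and> line_dist nd x < line_dist nd v)"
    using qtree_for_vertex_above[OF assms(1,3) nd assms(5,6)] by blast
  have "qprec P Q x v"
    using step by (intro qprecI[OF nd(1) v(2) nd(2) v(3)]) blast
  moreover have "higher P Q x v"
    using step
  proof
    assume "\<exists>z. z \<noteq> [] \<and> \<pi>' = \<pi> @ z"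
    then have "length \<pi> < length \<pi>'" by auto
    then show ?thesis using depth_elevation_ge(1)[OF v(2,3)] deepest unfolding higher_def by simp
  next
    assume same: "\<pi>' = \<pi> \<and> nd' = nd \<and> line_dist nd x < line_dist nd v"
    then have "depth P Q x \<le> depth P Q v" using depth_elevation_ge(1)[OF v(2,3)] deepest(1) by simp
    moreover have "elevation P Q x < elevation P Q v" if "depth P Q x = depth P Q v"
    proof -
      have "line_dist nd v \<le> elevation P Q v"
        using depth_elevation_ge(2)[OF v(2,3)] same deepest(1) that by simp
      then show ?thesis using same deepest(2) by simp
    qed
    ultimately show ?thesis unfolding higher_def by (cases "depth P Q x = depth P Q v") auto
  qed
  ultimately show ?thesis using v(1) by blast
qed

section \<open>Encoding an array by an ordered downdraft, corners and hull indices\<close>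

definition entries :: "int \<times> int \<times> int \<Rightarrow> int set" where
  "entries w = {fst w, fst (snd w), snd (snd w)}"

lemma in_CA_iff: "C \<in> CA W \<longleftrightarrow> length C = length W \<and> (\<forall>i < length W. C ! i \<in> entries (W ! i))"
proof -
  have "(case w of (a, b, c) \<Rightarrow> k \<in> {a, b, c}) \<longleftrightarrow> k \<in> entries w" for w :: "int \<times> int \<times> int" and k
    by (cases w) (simp add: entries_def)
  then show ?thesis unfolding CA_def by simp
qed

lemma V_memD:
  assumes "I \<in> V P W"
  shows "distinct I" "set I = P" "is_witness P I W" "length W = length I"
proof -
  have "I \<in> arrays P" "is_witness P I W" using assms unfolding V_def by simp_all
  then show "distinct I" "set I = P" "is_witness P I W" "length W = length I"
    unfolding arrays_def is_witness_def by simp_all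
qed

lemma is_witness_interiorD:
  assumes "is_witness P I W" "i < length I" "I ! i \<notin> chP P"
  shows "\<forall>k \<in> entries (W ! i). valid_idx I k"
    and "I ! i \<in> interior (convex hull (aget I ` entries (W ! i)))"
proof -
  obtain a b c where w: "W ! i = (a, b, c)" by (cases "W ! i") auto
  have "case W ! i of (a, b, c) \<Rightarrow> (if I ! i \<in> chP P then a = -1 \<and> b = -1 \<and> c = -1
      else valid_idx I a \<and> valid_idx I b \<and> valid_idx I c \<and>
        I ! i \<in> interior (convex hull {aget I a, aget I b, aget I c}))"
    using conjunct2[OF assms(1)[unfolded is_witness_def], rule_format, OF assms(2)] .
  then have "valid_idx I a \<and> valid_idx I b \<and> valid_idx I c \<and>
      I ! i \<in> interior (convex hull {aget I a, aget I b, aget I c})"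
    using assms(3) unfolding w by simp
  then show "\<forall>k \<in> entries (W ! i). valid_idx I k"
    and "I ! i \<in> interior (convex hull (aget I ` entries (W ! i)))"
    unfolding entries_def w by auto
qed

definition hull_indices :: "pt list \<Rightarrow> pt list \<Rightarrow> int list" where
  "hull_indices L I = map (\<lambda>v. int (index_of I v) + 1) L"

lemma hull_indices_in_HL:
  assumes L: "set L = chP P" "ccw_cyclic L" "L \<noteq> []" "leftmost_in (hd L) (chP P)"
    and I: "I \<in> arrays P"
  shows "hull_indices L I \<in> HL P"
proof -
  have "distinct I" "set I = P" using I unfolding arrays_def by simp_all
  have mem: "v \<in> set I" if "v \<in> set L" for v
    using that L(1) \<open>set I = P\<close> unfolding chP_def by blast
  have map: "map (aget I) (hull_indices L I) = L"
    unfolding hull_indices_def by (simp add: map_idI aget_Suc index_of \<open>distinct I\<close> mem)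
  have "valid_idx I k" if k: "k \<in> set (hull_indices L I)" for k
  proof -
    obtain v where "v \<in> set L" "k = int (index_of I v) + 1"
      using k unfolding hull_indices_def set_map by blast
    then show ?thesis
      using index_of(1)[OF \<open>distinct I\<close> mem[OF \<open>v \<in> set L\<close>]] unfolding valid_idx_def by simp
  qed
  moreover have "aget I (hd (hull_indices L I)) = hd L"
    using map L(3) by (metis hd_map map_is_Nil_conv)
  ultimately have "is_hull_list P I (hull_indices L I)"
    unfolding is_hull_list_def map using L by (simp add: hull_indices_def)
  then show ?thesis unfolding HL_def using I by blast
qed

lemma hull_indices_mem_iff:
  assumes "set L = chP P" "distinct I" "set I = P" "i < length I"
  shows "int i + 1 \<in> set (hull_indices L I) \<longleftrightarrow> I ! i \<in> chP P"
proof -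
  have "int i + 1 \<in> set (hull_indices L I) \<longleftrightarrow> (\<exists>v \<in> chP P. index_of I v = i)"
    unfolding hull_indices_def using assms(1) by auto
  also have "\<dots> \<longleftrightarrow> I ! i \<in> chP P"
  proof
    assume "\<exists>v \<in> chP P. index_of I v = i"
    then obtain v where "v \<in> chP P" "index_of I v = i" by blast
    moreover have "v \<in> set I" using \<open>v \<in> chP P\<close> assms(3) unfolding chP_def by blast
    ultimately show "I ! i \<in> chP P" using index_of(2)[OF assms(2)] by metis
  qed (use index_of_nth[OF assms(2,4)] in blast)
  finally show ?thesis .
qed

context
  fixes P :: "pt set" and Q :: qtree and W :: "(int \<times> int \<times> int) list"
  assumes finite: "finite P" and gen_pos: "gen_pos P" and qtree_for: "qtree_for P Q"
begin

definition corner :: "pt list \<Rightarrow> nat \<Rightarrow> int" where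
  "corner I i = (SOME k. k \<in> entries (W ! i) \<and>
     qprec P Q (I ! i) (aget I k) \<and> higher P Q (I ! i) (aget I k))"

lemma corner:
  assumes "I \<in> V P W" "i < length I" "I ! i \<notin> chP P"
  shows "corner I i \<in> entries (W ! i)" "valid_idx I (corner I i)"
    and "qprec P Q (I ! i) (aget I (corner I i))" "higher P Q (I ! i) (aget I (corner I i))"
proof -
  note I = V_memD[OF assms(1)]
  let ?e = "entries (W ! i)"
  have valid: "\<forall>k \<in> ?e. valid_idx I k" and interior: "I ! i \<in> interior (convex hull (aget I ` ?e))"
    using is_witness_interiorD[OF I(3) assms(2,3)] by auto
  have triangle: "aget I ` ?e = {aget I (fst (W ! i)), aget I (fst (snd (W ! i))), aget I (snd (snd (W ! i)))}"
    unfolding entries_def by simp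
  have "aget I ` ?e \<subseteq> P" using valid aget_mem I(2) by blast
  moreover have "I ! i \<in> P - chP P" using nth_mem[OF assms(2)] assms(3) I(2) by simp
  ultimately obtain v where "v \<in> aget I ` ?e" "qprec P Q (I ! i) v" "higher P Q (I ! i) v"
    using witness_corner_above[OF finite gen_pos qtree_for] interior unfolding triangle by blast
  then have "\<exists>k. k \<in> ?e \<and> qprec P Q (I ! i) (aget I k) \<and> higher P Q (I ! i) (aget I k)" by blast
  then have "corner I i \<in> ?e \<and> qprec P Q (I ! i) (aget I (corner I i)) \<and>
      higher P Q (I ! i) (aget I (corner I i))"
    unfolding corner_def by (rule someI_ex)
  then show "corner I i \<in> ?e" "valid_idx I (corner I i)"
    "qprec P Q (I ! i) (aget I (corner I i))" "higher P Q (I ! i) (aget I (corner I i))"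
    using valid by auto
qed

definition downdraft :: "pt list \<Rightarrow> pt \<Rightarrow> pt" where
  "downdraft I = restrict (\<lambda>x. aget I (corner I (index_of I x))) (P - chP P)"

lemma downdraft_nth:
  assumes "I \<in> V P W" "i < length I" "I ! i \<notin> chP P"
  shows "downdraft I (I ! i) = aget I (corner I i)"
proof -
  note I = V_memD[OF assms(1)]
  have "I ! i \<in> P - chP P" using nth_mem[OF assms(2)] assms(3) I(2) by simp
  then show ?thesis unfolding downdraft_def using index_of_nth[OF I(1) assms(2)] by simp
qed

lemma downdraft:
  assumes "I \<in> V P W" "x \<in> P - chP P"
  shows "downdraft I x \<in> P" "qprec P Q x (downdraft I x)" "higher P Q x (downdraft I x)"
proof -
  note I = V_memD[OF assms(1)]
  have "x \<in> set I" using assms(2) I(2) by simp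
  then have i: "index_of I x < length I" "I ! index_of I x = x" using index_of[OF I(1)] by auto
  then have "I ! index_of I x \<notin> chP P" using assms(2) by simp
  note c = corner[OF assms(1) i(1) this] and d = downdraft_nth[OF assms(1) i(1) this]
  show "downdraft I x \<in> P" using d aget_mem[OF c(2)] I(2) i(2) by simp
  show "qprec P Q x (downdraft I x)" "higher P Q x (downdraft I x)" using c(3,4) d i(2) by simp_all
qed

definition fiber_order :: "pt list \<Rightarrow> pt rel" where
  "fiber_order I = {(u, w). u \<in> P - chP P \<and> w \<in> P - chP P \<and>
     downdraft I u = downdraft I w \<and> index_of I u \<le> index_of I w}"

lemma ordered_downdraft_in_OD:
  assumes "I \<in> V P W"
  shows "(downdraft I, fiber_order I) \<in> OD P Q"
proof -
  note I = V_memD[OF assms]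
  have "downdraft I \<in> (P - chP P) \<rightarrow>\<^sub>E P"
    using downdraft(1)[OF assms] unfolding downdraft_def by auto
  moreover have "linear_order_on F (fiber_order I \<inter> (F \<times> F))"
    if "F = {x \<in> P - chP P. downdraft I x = y}" for F y
  proof -
    have "inj_on (index_of I) F"
      using inj_on_index_of[OF I(1)] I(2) that by (auto intro: inj_on_subset)
    moreover have "fiber_order I \<inter> (F \<times> F) =
        {(u, w). u \<in> F \<and> w \<in> F \<and> index_of I u \<le> index_of I w}"
      unfolding fiber_order_def that by auto
    ultimately show ?thesis by (simp add: linear_order_on_inj)
  qed
  moreover have "fiber_order I \<subseteq> {(a, b). a \<in> P - chP P \<and> b \<in> P - chP P \<and> downdraft I a = downdraft I b}"
    unfolding fiber_order_def by blast
  ultimately show ?thesis unfolding OD_def using downdraft(2)[OF assms] by blast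
qed

definition corner_assignment :: "pt list \<Rightarrow> int list" where
  "corner_assignment I = map (\<lambda>i. if I ! i \<in> chP P then fst (W ! i) else corner I i) [0..<length W]"

lemma corner_assignment_in_CA:
  assumes "I \<in> V P W"
  shows "corner_assignment I \<in> CA W"
  unfolding in_CA_iff corner_assignment_def
  using corner(1)[OF assms] V_memD(4)[OF assms] by (simp add: entries_def)

definition encode :: "pt list \<Rightarrow> pt list \<Rightarrow> ((pt \<Rightarrow> pt) \<times> pt rel) \<times> int list \<times> int list" where
  "encode L I = ((downdraft I, fiber_order I), corner_assignment I, hull_indices L I)"

lemma encode_in_OD_CA_HL:
  assumes "set L = chP P" "ccw_cyclic L" "L \<noteq> []" "leftmost_in (hd L) (chP P)" "I \<in> V P W"
  shows "encode L I \<in> OD P Q \<times> CA W \<times> HL P"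
  using ordered_downdraft_in_OD[OF assms(5)] corner_assignment_in_CA[OF assms(5)]
    hull_indices_in_HL[OF assms(1-4)] assms(5)
  unfolding encode_def V_def by blast

lemma fiber_indices:
  assumes L: "set L = chP P" and I: "I \<in> V P W" and "y \<in> P"
  shows "index_of I ` {u \<in> P - chP P. downdraft I u = y} =
    {i. i < length I \<and> int i + 1 \<notin> set (hull_indices L I) \<and>
        corner_assignment I ! i = int (index_of I y) + 1}"
    (is "index_of I ` ?F = ?R")
proof -
  note D = V_memD[OF I]
  have y: "y \<in> set I" using \<open>y \<in> P\<close> D(2) by simp
  have key: "downdraft I (I ! i) = y \<longleftrightarrow> corner_assignment I ! i = int (index_of I y) + 1"
    if "i < length I" "I ! i \<notin> chP P" for i
  proof -
    have "corner_assignment I ! i = corner I i"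
      using that D(4) unfolding corner_assignment_def by simp
    then show ?thesis
      using downdraft_nth[OF I that] aget_eq_iff[OF D(1) corner(2)[OF I that] y] by simp
  qed
  show ?thesis
  proof (intro set_eqI iffI)
    fix i assume "i \<in> index_of I ` ?F"
    then obtain u where u: "u \<in> P - chP P" "downdraft I u = y" "i = index_of I u" by blast
    have "u \<in> set I" using u(1) D(2) by simp
    then have i: "i < length I" "I ! i = u" using index_of[OF D(1)] u(3) by simp_all
    then show "i \<in> ?R" using key[OF i(1)] hull_indices_mem_iff[OF L D(1,2) i(1)] u(1,2) by simp
  next
    fix i assume "i \<in> ?R"
    then have i: "i < length I" "int i + 1 \<notin> set (hull_indices L I)"
      "corner_assignment I ! i = int (index_of I y) + 1"
      by simp_all
    then have "I ! i \<notin> chP P" using hull_indices_mem_iff[OF L D(1,2) i(1)] by simp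
    note i = i(1) this i(3)
    have "I ! i \<in> ?F" using key[OF i(1,2)] i nth_mem[OF i(1)] D(2) by simp
    moreover have "i = index_of I (I ! i)" using index_of_nth[OF D(1) i(1)] by simp
    ultimately show "i \<in> index_of I ` ?F" by blast
  qed
qed

lemma encode_eqD:
  assumes "encode L I1 = encode L I2"
  shows "downdraft I1 = downdraft I2" "fiber_order I1 = fiber_order I2"
    and "corner_assignment I1 = corner_assignment I2" "hull_indices L I1 = hull_indices L I2"
  using assms unfolding encode_def by simp_all

text \<open>Once the position of y is known, the corner assignment and the hull indices determine the
  positions of the fiber of y, and the fiber order tells which of them belongs to z.\<close>
lemma index_of_eq_in_fiber:
  assumes L: "set L = chP P" and I1: "I1 \<in> V P W" and I2: "I2 \<in> V P W"
    and eq: "encode L I1 = encode L I2"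
    and y: "y \<in> P" "index_of I1 y = index_of I2 y"
    and z: "z \<in> P - chP P" "downdraft I1 z = y"
  shows "index_of I1 z = index_of I2 z"
proof -
  note dd = encode_eqD(1)[OF eq] and fo = encode_eqD(2)[OF eq]
  let ?F = "{u \<in> P - chP P. downdraft I1 u = y}"
  have "length I1 = length I2" using V_memD(4)[OF I1] V_memD(4)[OF I2] by simp
  have "index_of I1 ` ?F = {i. i < length I1 \<and> int i + 1 \<notin> set (hull_indices L I1) \<and>
      corner_assignment I1 ! i = int (index_of I1 y) + 1}"
    by (rule fiber_indices[OF L I1 y(1)])
  also have "\<dots> = {i. i < length I2 \<and> int i + 1 \<notin> set (hull_indices L I2) \<and>
      corner_assignment I2 ! i = int (index_of I2 y) + 1}"
    using \<open>length I1 = length I2\<close> encode_eqD(3,4)[OF eq] y(2) by simp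
  also have "\<dots> = index_of I2 ` ?F"
    using fiber_indices[OF L I2 y(1)] dd by simp
  finally have same_image: "index_of I1 ` ?F = index_of I2 ` ?F" .
  have same_order: "index_of I1 u \<le> index_of I1 w \<longleftrightarrow> index_of I2 u \<le> index_of I2 w"
    if "u \<in> ?F" "w \<in> ?F" for u w
  proof -
    have "(u, w) \<in> fiber_order I1 \<longleftrightarrow> index_of I1 u \<le> index_of I1 w"
      using that unfolding fiber_order_def by simp
    moreover have "(u, w) \<in> fiber_order I2 \<longleftrightarrow> index_of I2 u \<le> index_of I2 w"
      using that dd unfolding fiber_order_def by simp
    ultimately show ?thesis using fo by simp
  qed
  have inj: "inj_on (index_of I) ?F" if "I \<in> V P W" for I
    by (rule inj_on_subset[OF inj_on_index_of[OF V_memD(1)[OF that]]]) (auto simp: V_memD(2)[OF that])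
  have "finite ?F" using finite by simp
  moreover have "z \<in> ?F" using z by simp
  ultimately show ?thesis
    using eq_if_same_order_same_image[OF _ inj[OF I1] inj[OF I2] same_image same_order] by blast
qed

lemma index_of_eq_if_encode_eq:
  assumes L: "set L = chP P" and I1: "I1 \<in> V P W" and I2: "I2 \<in> V P W"
    and eq: "encode L I1 = encode L I2" and "x \<in> P"
  shows "index_of I1 x = index_of I2 x"
  using finite \<open>x \<in> P\<close> higher_trans higher_irrefl
proof (rule finite_strict_order_induct)
  fix z assume "z \<in> P" and IH: "\<And>y. y \<in> P \<Longrightarrow> higher P Q z y \<Longrightarrow> index_of I1 y = index_of I2 y"
  show "index_of I1 z = index_of I2 z"
  proof (cases "z \<in> chP P")
    case True
    then have "z \<in> set L" using L by simp
    then show ?thesis using encode_eqD(4)[OF eq] unfolding hull_indices_def map_eq_conv by simp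
  next
    case False
    then have z: "z \<in> P - chP P" using \<open>z \<in> P\<close> by simp
    have "downdraft I1 z \<in> P" "higher P Q z (downdraft I1 z)" using downdraft(1,3)[OF I1 z] by simp_all
    then show ?thesis
      using index_of_eq_in_fiber[OF L I1 I2 eq _ IH z refl] by simp
  qed
qed

lemma inj_on_encode:
  assumes "set L = chP P"
  shows "inj_on (encode L) (V P W)"
proof (rule inj_onI)
  fix I1 I2 assume I1: "I1 \<in> V P W" and I2: "I2 \<in> V P W" and eq: "encode L I1 = encode L I2"
  note D1 = V_memD[OF I1] and D2 = V_memD[OF I2]
  show "I1 = I2"
  proof (rule nth_equalityI)
    show "length I1 = length I2" using D1(4) D2(4) by simp
    fix i assume i: "i < length I1"
    have "I1 ! i \<in> P" using nth_mem[OF i] D1(2) by simp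
    then have "index_of I2 (I1 ! i) = i"
      using index_of_eq_if_encode_eq[OF assms I1 I2 eq] index_of_nth[OF D1(1) i] by simp
    moreover have "I1 ! i \<in> set I2" using \<open>I1 ! i \<in> P\<close> D2(2) by simp
    ultimately show "I1 ! i = I2 ! i" using index_of(2)[OF D2(1)] by metis
  qed
qed

end

theorem lemma5p3:
  fixes P :: "pt set" and n :: nat and W :: "(int \<times> int \<times> int) list" and Q :: qtree
  assumes "finite P" and "card P = n" and "gen_pos P"
    and "length W = n"
    and "qtree_for P Q"
  shows "\<exists>\<Phi>. inj_on \<Phi> (V P W) \<and> \<Phi> ` V P W \<subseteq> OD P Q \<times> CA W \<times> HL P"
proof -
  obtain L where L: "set L = chP P" "ccw_cyclic L" "L \<noteq> []" "leftmost_in (hd L) (chP P)"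
    by (rule qtree_for_hull_cycle[OF assms(1,5)])
  have "inj_on (encode P Q W L) (V P W)"
    by (rule inj_on_encode[OF assms(1,3,5) L(1)])
  moreover have "encode P Q W L ` V P W \<subseteq> OD P Q \<times> CA W \<times> HL P"
    using encode_in_OD_CA_HL[OF assms(1,3,5) L] by blast
  ultimately show ?thesis by blast
qed

end
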